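(* Fix the parameters $S_1,\dots,S_{\mathcal K}$, $\lambda_1,\dots,\lambda_{\mathcal K}$ of the storage model in the context. Suppose that there exists a routing policy $P$ such that the shape process $\tilde X(t)$ with routing policy $P$ is recurrent. Then the linear system \[ \sum_{j=1}^{\kappa_i}\alpha_{ij}=\lambda_i\ (i=1,\dots,\mathcal K),\qquad \sum_{i=1}^{\mathcal K}\sum_{j=1}^{\kappa_i}\alpha_{ij}\,\delta_{\ell,s^i_j}=\tfrac1n\ (\ell=1,\dots,n) \] has a non-negative solution $(\alpha_{ij})$ (and hence there exists a routing policy, not depending on $x$, under which arrivals at all nodes are independent Poisson processes of common rate $1/n$).
   Context: Storage model: there are $n$ nodes $\{1,\dots,n\}$ and $\mathcal K\ge1$ non-empty neighborhoods $S_1,\dots,S_{\mathcal K}\subset\{1,\dots,n\}$ with $\bigcup_i S_i=\{1,\dots,n\}$; $\kappa_i=|S_i|$ and $S_i=\{s^i_1,\dots,s^i_{\kappa_i}\}$. Items arrive at $S_i$ as independent Poisson processes with rates $\lambda_i>0$, $\sum_{i=1}^{\mathcal K}\lambda_i=1$. Let $\Lambda_i=\{p\in\mathbb R^{\kappa_i}:p_j\ge0,\sum_j p_j=1\}$. A routing policy is a map $P:\mathbb N^n\to\Lambda_1\times\dots\times\Lambda_{\mathcal K}$ with $P(x+c\mathbf 1)=P(x)$ for all integers $c$; an item arriving at $S_i$ when the configuration is $x$ is stored at node $s^i_j$ with probability $p^{(i)}_j(x)$, independently for each arrival (the policy need not be local). $X(t)$ is the vector of node loads at time $t$, $M(t)=\frac1n\sum_iX_i(t)$,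 the shape is $\tilde X(t)=X(t)-M(t)\mathbf 1$, and $\tilde X^e(m)$ is the shape observed at successive arrival moments. With $\tau=\inf\{m>0:\tilde X^e(m)=0\}$, the process is called recurrent if $\mathbf P(\tau<\infty\mid\tilde X^e(0)=x)=1$ for every $x$. $\delta_{\ell,m}$ is the Kronecker delta. *)

theory Defs
  imports Complex_Main
begin

text \<open>Nodes are 1..n, neighbourhoods are indexed by i in 1..K;
  neighbourhood i has size kappa i and elements s i 1, ..., s i (kappa i)
  (pairwise distinct). lam i is the arrival rate at neighbourhood i.
  A configuration is a load vector x :: nat => nat, only the values on 1..n matter.\<close>

definition storage_model ::
  "nat \<Rightarrow> nat \<Rightarrow> (nat \<Rightarrow> nat) \<Rightarrow> (nat \<Rightarrow> nat \<Rightarrow> nat) \<Rightarrow> (nat \<Rightarrow> real) \<Rightarrow> bool" where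
  "storage_model n K kappa s lam \<longleftrightarrow>
     K \<ge> 1 \<and>
     (\<forall>i\<in>{1..K}. kappa i \<ge> 1) \<and>
     (\<forall>i\<in>{1..K}. \<forall>j\<in>{1..kappa i}. s i j \<in> {1..n}) \<and>
     (\<forall>i\<in>{1..K}. inj_on (s i) {1..kappa i}) \<and>
     (\<Union>i\<in>{1..K}. s i ` {1..kappa i}) = {1..n} \<and>
     (\<forall>i\<in>{1..K}. lam i > 0) \<and>
     (\<Sum>i=1..K. lam i) = 1"

text \<open>A routing policy: p x i j is the probability that an item arriving at
  neighbourhood i in configuration x is stored at node s i j.\<close>

definition routing_policy ::
  "nat \<Rightarrow> nat \<Rightarrow> (nat \<Rightarrow> nat) \<Rightarrow> ((nat \<Rightarrow> nat) \<Rightarrow> nat \<Rightarrow> nat \<Rightarrow> real) \<Rightarrow> bool" where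
  "routing_policy n K kappa p \<longleftrightarrow>
     (\<forall>x i. i \<in> {1..K} \<longrightarrow>
        (\<forall>j\<in>{1..kappa i}. p x i j \<ge> 0) \<and> (\<Sum>j=1..kappa i. p x i j) = 1) \<and>
     (\<forall>x y (c::int). (\<forall>l\<in>{1..n}. int (y l) = int (x l) + c) \<longrightarrow>
        (\<forall>i\<in>{1..K}. \<forall>j\<in>{1..kappa i}. p y i j = p x i j))"

definition mean_load :: "nat \<Rightarrow> (nat \<Rightarrow> nat) \<Rightarrow> real" where
  "mean_load n x = (\<Sum>l=1..n. real (x l)) / real n"

definition shape :: "nat \<Rightarrow> (nat \<Rightarrow> nat) \<Rightarrow> nat \<Rightarrow> real" where
  "shape n x l = real (x l) - mean_load n x"

definition shape_zero :: "nat \<Rightarrow> (nat \<Rightarrow> nat) \<Rightarrow> bool" where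
  "shape_zero n x \<longleftrightarrow> (\<forall>l\<in>{1..n}. shape n x l = 0)"

text \<open>Probability that the next arriving item (embedded chain) is stored at node l
  when the configuration is x.\<close>

definition route_prob ::
  "nat \<Rightarrow> (nat \<Rightarrow> nat) \<Rightarrow> (nat \<Rightarrow> nat \<Rightarrow> nat) \<Rightarrow> (nat \<Rightarrow> real)
   \<Rightarrow> ((nat \<Rightarrow> nat) \<Rightarrow> nat \<Rightarrow> nat \<Rightarrow> real) \<Rightarrow> (nat \<Rightarrow> nat) \<Rightarrow> nat \<Rightarrow> real" where
  "route_prob K kappa s lam p x l =
     (\<Sum>i=1..K. lam i * (\<Sum>j=1..kappa i. p x i j * (if l = s i j then 1 else 0)))"

text \<open>survive ... m x = P(tau > m | X^e(0) = x), i.e. the probability that the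
  shapes at arrival moments 1..m are all nonzero.\<close>

fun survive ::
  "nat \<Rightarrow> nat \<Rightarrow> (nat \<Rightarrow> nat) \<Rightarrow> (nat \<Rightarrow> nat \<Rightarrow> nat) \<Rightarrow> (nat \<Rightarrow> real)
   \<Rightarrow> ((nat \<Rightarrow> nat) \<Rightarrow> nat \<Rightarrow> nat \<Rightarrow> real) \<Rightarrow> nat \<Rightarrow> (nat \<Rightarrow> nat) \<Rightarrow> real" where
  "survive n K kappa s lam p 0 x = 1"
| "survive n K kappa s lam p (Suc m) x =
     (\<Sum>l=1..n. route_prob K kappa s lam p x l *
        (let x' = x(l := Suc (x l)) in
          if shape_zero n x' then 0 else survive n K kappa s lam p m x'))"

text \<open>Recurrence: P(tau < infinity | start) = lim_m P(tau <= m | start) = 1 for every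
  initial configuration (equivalently every initial shape, by shift invariance).\<close>

definition recurrent ::
  "nat \<Rightarrow> nat \<Rightarrow> (nat \<Rightarrow> nat) \<Rightarrow> (nat \<Rightarrow> nat \<Rightarrow> nat) \<Rightarrow> (nat \<Rightarrow> real)
   \<Rightarrow> ((nat \<Rightarrow> nat) \<Rightarrow> nat \<Rightarrow> nat \<Rightarrow> real) \<Rightarrow> bool" where
  "recurrent n K kappa s lam p \<longleftrightarrow>
     (\<forall>x. (\<lambda>m. 1 - survive n K kappa s lam p m x) \<longlonglongrightarrow> 1)"

end

theory Submission
  imports Defs "HOL-Analysis.Analysis"
begin

text \<open>Call a nonnegative \<open>\<alpha>\<close> with row sums \<open>\<lambda>\<^sub>i\<close> a flow; its node rates form a compact convex
  set containing, for every configuration \<open>x\<close>, the routing probabilities of the policy at \<open>x\<close>.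
  If no flow has uniform node rates \<open>1/n\<close>, a hyperplane \<open>d\<close> strictly separates this set
  from the uniform vector. Then, whatever the configuration, the potential \<open>\<Sum>\<^sub>l d\<^sub>l X\<^sub>l\<close>
  of the shape increases in mean by at least some \<open>\<epsilon> > 0\<close> per arrival, with bounded
  increments, so \<open>exp (- \<theta> \<cdot> potential)\<close> is a supermartingale for small \<open>\<theta> > 0\<close>. It
  equals \<open>1\<close> at the zero shape and is \<open>< 1\<close> one arrival away from the empty configuration
  at a node of positive increment, so from there the zero shape is missed with positive
  probability, contradicting recurrence.\<close>

lemma nonneg_if_quadratic_nonneg_near_zero:
  fixes D E :: real
  assumes "\<And>t. 0 < t \<Longrightarrow> t \<le> 1 \<Longrightarrow> 0 \<le> 2 * t * D + t\<^sup>2 * E"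
  shows "0 \<le> D"
proof (rule ccontr)
  assume "\<not> 0 \<le> D"
  hence D: "D < 0" by simp
  have E: "E > 0"
    using assms[of 1] D by fastforce
  define t where "t = min 1 (- D / E)"
  have t: "0 < t" "t \<le> 1" "t * E \<le> - D"
    using D E by (auto simp: t_def min_def field_simps)
  have "2 * t * D + t\<^sup>2 * E = t * (D + (D + t * E))"
    by (simp add: power2_eq_square algebra_simps)
  also have "\<dots> < 0"
    using t D by (intro mult_pos_neg) auto
  finally show False
    using assms[OF t(1,2)] by simp
qed

lemma convex_compact_separation:
  fixes C :: "('a \<Rightarrow> real) set" and z :: "'a \<Rightarrow> real"
  assumes "finite L" "compact C" "C \<noteq> {}"
    and convex: "\<And>c c' t. c \<in> C \<Longrightarrow> c' \<in> C \<Longrightarrow> 0 \<le> t \<Longrightarrow> t \<le> 1 \<Longrightarrow>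
                   (\<lambda>l. (1 - t) * c l + t * c' l) \<in> C"
  shows "(\<exists>c\<in>C. \<forall>l\<in>L. c l = z l) \<or>
         (\<exists>d \<epsilon>. \<epsilon> > 0 \<and> (\<forall>c\<in>C. (\<Sum>l\<in>L. d l * z l) + \<epsilon> \<le> (\<Sum>l\<in>L. d l * c l)))"
proof -
  define f where "f c = (\<Sum>l\<in>L. (c l - z l)\<^sup>2)" for c :: "'a \<Rightarrow> real"
  have "continuous_on C f"
    unfolding f_def
    by (rule continuous_on_subset[of UNIV])
       (intro continuous_intros continuous_on_product_coordinates, simp)
  then obtain c where c: "c \<in> C" and c_min: "\<And>c'. c' \<in> C \<Longrightarrow> f c \<le> f c'"
    using continuous_attains_inf[OF assms(2,3)] by blast
  define d where "d l = c l - z l" for l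
  show ?thesis
  proof (cases "f c = 0")
    case True
    then have "\<forall>l\<in>L. c l = z l"
      using \<open>finite L\<close> by (simp add: f_def sum_nonneg_eq_0_iff)
    with c show ?thesis by blast
  next
    case False
    then have "f c > 0"
      by (simp add: f_def order_less_le sum_nonneg)
    moreover have "(\<Sum>l\<in>L. d l * z l) + f c \<le> (\<Sum>l\<in>L. d l * c' l)" if c': "c' \<in> C" for c'
    proof -
      define e where "e l = c' l - c l" for l
      \<comment> \<open>\<open>c\<close> minimises \<open>f\<close> along the segment towards \<open>c'\<close>\<close>
      have "0 \<le> (\<Sum>l\<in>L. d l * e l)"
      proof (rule nonneg_if_quadratic_nonneg_near_zero)
        fix t :: real assume t: "0 < t" "t \<le> 1"
        have "f c \<le> f (\<lambda>l. (1 - t) * c l + t * c' l)"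
          using c c' t by (intro c_min convex) auto
        also have "\<dots> = (\<Sum>l\<in>L. (d l + t * e l)\<^sup>2)"
          unfolding f_def d_def e_def by (intro sum.cong) (auto simp: algebra_simps)
        also have "\<dots> = f c + 2 * t * (\<Sum>l\<in>L. d l * e l) + t\<^sup>2 * (\<Sum>l\<in>L. (e l)\<^sup>2)"
          unfolding f_def d_def[symmetric]
          by (simp add: power2_eq_square algebra_simps sum.distrib sum_distrib_left)
        finally show "0 \<le> 2 * t * (\<Sum>l\<in>L. d l * e l) + t\<^sup>2 * (\<Sum>l\<in>L. (e l)\<^sup>2)"
          by simp
      qed
      moreover have "(\<Sum>l\<in>L. d l * c l) = (\<Sum>l\<in>L. d l * z l + (d l)\<^sup>2)"
        by (intro sum.cong) (simp_all add: d_def power2_eq_square algebra_simps)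
      then have "(\<Sum>l\<in>L. d l * c l) = (\<Sum>l\<in>L. d l * z l) + f c"
        by (simp add: f_def d_def sum.distrib)
      ultimately show ?thesis
        by (simp add: e_def algebra_simps sum_subtractf)
    qed
    ultimately show ?thesis by blast
  qed
qed

lemma exp_bound_abs_le_one:
  fixes y :: real
  assumes "\<bar>y\<bar> \<le> 1"
  shows "exp y \<le> 1 + y + y\<^sup>2"
proof (cases "0 \<le> y")
  case True
  then show ?thesis using exp_bound assms by simp
next
  case False
  have "exp y * (1 - y) \<le> exp y * exp (- y)"
    using exp_ge_add_one_self[of "- y"] by (intro mult_left_mono) auto
  also have "\<dots> = 1"
    by (simp add: exp_minus_inverse)
  also have "\<dots> \<le> (1 + y + y\<^sup>2) * (1 - y)"
    using False by (simp add: power2_eq_square algebra_simps mult_nonpos_nonneg)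
  finally show ?thesis
    using False by (simp add: mult_le_cancel_right)
qed

lemma weighted_exp_le_one_if_drift:
  fixes r D :: "'a \<Rightarrow> real"
  assumes "finite L" and r_nonneg: "\<And>l. l \<in> L \<Longrightarrow> 0 \<le> r l" and r_sum: "sum r L = 1"
    and "0 < \<epsilon>" and drift: "\<epsilon> \<le> (\<Sum>l\<in>L. r l * D l)"
    and D_bound: "\<And>l. l \<in> L \<Longrightarrow> \<bar>D l\<bar> \<le> B"
  shows "(\<Sum>l\<in>L. r l * exp (- (\<epsilon> / B\<^sup>2) * D l)) \<le> 1"
proof -
  define \<theta> where "\<theta> = \<epsilon> / B\<^sup>2"
  have "(\<Sum>l\<in>L. r l * D l) \<le> (\<Sum>l\<in>L. r l * B)"
    using r_nonneg D_bound by (intro sum_mono mult_left_mono) (auto simp: abs_le_iff)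
  then have "\<epsilon> \<le> B"
    using drift r_sum by (simp add: sum_distrib_right[symmetric])
  then have B: "0 < B" "\<theta> * B \<le> 1" "\<theta>\<^sup>2 * B\<^sup>2 = \<theta> * \<epsilon>"
    using \<open>0 < \<epsilon>\<close> by (auto simp: \<theta>_def power2_eq_square field_simps)
  have "0 < \<theta>"
    using \<open>0 < \<epsilon>\<close> B by (simp add: \<theta>_def)
  have "(\<Sum>l\<in>L. r l * exp (- \<theta> * D l)) \<le> (\<Sum>l\<in>L. r l * (1 - \<theta> * D l + \<theta>\<^sup>2 * B\<^sup>2))"
  proof (intro sum_mono mult_left_mono r_nonneg)
    fix l assume l: "l \<in> L"
    have "\<bar>- \<theta> * D l\<bar> \<le> \<theta> * B"
      using D_bound[OF l] \<open>0 < \<theta>\<close> by (simp add: abs_mult)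
    then have "exp (- \<theta> * D l) \<le> 1 - \<theta> * D l + (\<theta> * D l)\<^sup>2"
      using exp_bound_abs_le_one[of "- \<theta> * D l"] B(2) by simp
    also have "(\<theta> * D l)\<^sup>2 \<le> \<theta>\<^sup>2 * B\<^sup>2"
      using D_bound[OF l] \<open>0 < \<theta>\<close>
      by (simp add: power_mult_distrib abs_le_square_iff[symmetric] abs_of_pos B(1))
    finally show "exp (- \<theta> * D l) \<le> 1 - \<theta> * D l + \<theta>\<^sup>2 * B\<^sup>2"
      by simp
  qed
  also have "\<dots> = sum r L - \<theta> * (\<Sum>l\<in>L. r l * D l) + \<theta>\<^sup>2 * B\<^sup>2 * sum r L"
    by (simp add: algebra_simps sum.distrib sum_subtractf sum_distrib_left sum_distrib_right)
  also have "\<dots> = 1 - \<theta> * (\<Sum>l\<in>L. r l * D l) + \<theta> * \<epsilon>"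
    using r_sum B(3) by simp
  also have "\<dots> \<le> 1"
    using drift \<open>0 < \<theta>\<close> by (simp add: mult_left_mono)
  finally show ?thesis
    by (simp add: \<theta>_def)
qed

definition node_rate ::
  "nat \<Rightarrow> (nat \<Rightarrow> nat) \<Rightarrow> (nat \<Rightarrow> nat \<Rightarrow> nat) \<Rightarrow> (nat \<times> nat \<Rightarrow> real) \<Rightarrow> nat \<Rightarrow> real" where
  "node_rate K kappa s a l = (\<Sum>i=1..K. \<Sum>j=1..kappa i. a (i, j) * (if l = s i j then 1 else 0))"

text \<open>The bound \<open>a k \<le> 1\<close> is only there to make the set compact; the flows that
  matter satisfy it because every \<open>\<lambda>\<^sub>i \<le> 1\<close>.\<close>

definition feasible_flows :: "nat \<Rightarrow> (nat \<Rightarrow> nat) \<Rightarrow> (nat \<Rightarrow> real) \<Rightarrow> (nat \<times> nat \<Rightarrow> real) set" where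
  "feasible_flows K kappa lam =
     {a. (\<forall>k. 0 \<le> a k \<and> a k \<le> 1) \<and> (\<forall>i\<in>{1..K}. (\<Sum>j=1..kappa i. a (i, j)) = lam i)}"

definition policy_flow ::
  "nat \<Rightarrow> (nat \<Rightarrow> nat) \<Rightarrow> (nat \<Rightarrow> real) \<Rightarrow> ((nat \<Rightarrow> nat) \<Rightarrow> nat \<Rightarrow> nat \<Rightarrow> real)
   \<Rightarrow> (nat \<Rightarrow> nat) \<Rightarrow> nat \<times> nat \<Rightarrow> real" where
  "policy_flow K kappa lam p x =
     (\<lambda>(i, j). if i \<in> {1..K} \<and> j \<in> {1..kappa i} then lam i * p x i j else 0)"

lemma node_rate_linear:
  "node_rate K kappa s (\<lambda>k. u * a k + v * b k) l
     = u * node_rate K kappa s a l + v * node_rate K kappa s b l"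
  by (simp add: node_rate_def sum.distrib sum_distrib_left algebra_simps)

lemma feasible_flows_convex:
  assumes "a \<in> feasible_flows K kappa lam" "b \<in> feasible_flows K kappa lam" "0 \<le> t" "t \<le> 1"
  shows "(\<lambda>k. (1 - t) * a k + t * b k) \<in> feasible_flows K kappa lam"
proof -
  have "0 \<le> (1 - t) * a k + t * b k \<and> (1 - t) * a k + t * b k \<le> 1" for k
  proof -
    have "0 \<le> a k" "a k \<le> 1" "0 \<le> b k" "b k \<le> 1"
      using assms(1,2) unfolding feasible_flows_def by blast+
    then show ?thesis
      using assms(3,4) by (auto intro: convex_bound_le)
  qed
  moreover have "(\<Sum>j=1..kappa i. (1 - t) * a (i, j) + t * b (i, j)) = lam i" if "i \<in> {1..K}" for i
  proof -
    have "(\<Sum>j=1..kappa i. (1 - t) * a (i, j) + t * b (i, j))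
        = (1 - t) * (\<Sum>j=1..kappa i. a (i, j)) + t * (\<Sum>j=1..kappa i. b (i, j))"
      by (simp add: sum.distrib sum_distrib_left)
    then show ?thesis
      using assms(1,2) that by (simp add: feasible_flows_def algebra_simps)
  qed
  ultimately show ?thesis
    by (simp add: feasible_flows_def)
qed

lemma compact_feasible_flows: "compact (feasible_flows K kappa lam)"
proof -
  have "compact (PiE UNIV (\<lambda>_::nat \<times> nat. {0..1::real}))"
    using compactin_PiE[of "\<lambda>_. euclidean" UNIV "\<lambda>_::nat \<times> nat. {0..1::real}"]
    by (simp add: euclidean_product_topology)
  moreover have "closed {a :: nat \<times> nat \<Rightarrow> real. \<forall>i\<in>{1..K}. (\<Sum>j=1..kappa i. a (i, j)) = lam i}"
    unfolding Collect_ball_eq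
    by (intro closed_INT ballI closed_Collect_eq continuous_intros continuous_on_product_coordinates)
  moreover have "feasible_flows K kappa lam
      = PiE UNIV (\<lambda>_. {0..1}) \<inter> {a. \<forall>i\<in>{1..K}. (\<Sum>j=1..kappa i. a (i, j)) = lam i}"
    by (auto simp: feasible_flows_def)
  ultimately show ?thesis
    by (simp add: compact_Int_closed)
qed

lemma compact_node_rates:
  "compact (node_rate K kappa s ` feasible_flows K kappa lam)"
proof -
  have "continuous_on UNIV (\<lambda>a. node_rate K kappa s a l)" for l
    unfolding node_rate_def by (intro continuous_intros continuous_on_product_coordinates)
  then have "continuous_on (feasible_flows K kappa lam) (node_rate K kappa s)"
    by (intro continuous_on_coordinatewise_then_product) (rule continuous_on_subset[OF _ subset_UNIV])
  then show ?thesis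
    by (rule compact_continuous_image[OF _ compact_feasible_flows])
qed

lemma node_rate_nonneg:
  "a \<in> feasible_flows K kappa lam \<Longrightarrow> 0 \<le> node_rate K kappa s a l"
  unfolding node_rate_def feasible_flows_def by (auto intro!: sum_nonneg)

lemma sum_node_rate:
  assumes "\<And>i j. i \<in> {1..K} \<Longrightarrow> j \<in> {1..kappa i} \<Longrightarrow> s i j \<in> {1..n}"
    and "a \<in> feasible_flows K kappa lam"
  shows "(\<Sum>l=1..n. node_rate K kappa s a l) = (\<Sum>i=1..K. lam i)"
proof -
  have "(\<Sum>l=1..n. node_rate K kappa s a l)
      = (\<Sum>i=1..K. \<Sum>j=1..kappa i. \<Sum>l=1..n. a (i, j) * (if l = s i j then 1 else 0))"
    unfolding node_rate_def by (subst sum.swap) (intro sum.cong refl sum.swap)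
  also have "\<dots> = (\<Sum>i=1..K. \<Sum>j=1..kappa i. a (i, j))"
    using assms(1) by (intro sum.cong refl) (simp add: if_distrib cong: if_cong)
  also have "\<dots> = (\<Sum>i=1..K. lam i)"
    using assms(2) by (intro sum.cong) (auto simp: feasible_flows_def)
  finally show ?thesis .
qed

lemma route_prob_eq_node_rate:
  "route_prob K kappa s lam p x l = node_rate K kappa s (policy_flow K kappa lam p x) l"
  unfolding route_prob_def node_rate_def policy_flow_def
  by (intro sum.cong refl) (auto simp: sum_distrib_left intro!: sum.cong)

lemma storage_model_rate_bounds:
  assumes "storage_model n K kappa s lam" "i \<in> {1..K}"
  shows "0 \<le> lam i" "lam i \<le> 1"
proof -
  have "\<forall>i\<in>{1..K}. lam i > 0" "(\<Sum>i=1..K. lam i) = 1"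
    using assms(1) unfolding storage_model_def by auto
  then show "0 \<le> lam i" "lam i \<le> 1"
    using assms(2) member_le_sum[of i "{1..K}" lam] by (auto simp: less_imp_le)
qed

lemma policy_flow_feasible:
  assumes "storage_model n K kappa s lam" and "routing_policy n K kappa p"
  shows "policy_flow K kappa lam p x \<in> feasible_flows K kappa lam"
proof -
  have p_nonneg: "\<And>i j. i \<in> {1..K} \<Longrightarrow> j \<in> {1..kappa i} \<Longrightarrow> 0 \<le> p x i j"
    and p_sum: "\<And>i. i \<in> {1..K} \<Longrightarrow> (\<Sum>j=1..kappa i. p x i j) = 1"
    using assms(2) unfolding routing_policy_def by auto
  have p_le: "p x i j \<le> 1" if "i \<in> {1..K}" "j \<in> {1..kappa i}" for i j
    using member_le_sum[of j "{1..kappa i}" "p x i"] p_nonneg p_sum that by auto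
  have "0 \<le> policy_flow K kappa lam p x k \<and> policy_flow K kappa lam p x k \<le> 1" for k
    using storage_model_rate_bounds[OF assms(1)] p_nonneg p_le
    by (auto simp: policy_flow_def split: prod.split intro: mult_le_one)
  moreover have "(\<Sum>j=1..kappa i. policy_flow K kappa lam p x (i, j)) = lam i" if "i \<in> {1..K}" for i
    using that p_sum[OF that] by (simp add: policy_flow_def sum_distrib_left[symmetric])
  ultimately show ?thesis
    by (simp add: feasible_flows_def)
qed

lemma route_prob_distribution:
  assumes "storage_model n K kappa s lam" and "routing_policy n K kappa p"
  shows "0 \<le> route_prob K kappa s lam p x l" "(\<Sum>l=1..n. route_prob K kappa s lam p x l) = 1"
proof -
  note flow = policy_flow_feasible[OF assms]
  show "0 \<le> route_prob K kappa s lam p x l"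
    using node_rate_nonneg[OF flow] by (simp add: route_prob_eq_node_rate)
  have "\<And>i j. i \<in> {1..K} \<Longrightarrow> j \<in> {1..kappa i} \<Longrightarrow> s i j \<in> {1..n}" "(\<Sum>i=1..K. lam i) = 1"
    using assms(1) unfolding storage_model_def by auto
  then show "(\<Sum>l=1..n. route_prob K kappa s lam p x l) = 1"
    using sum_node_rate[OF _ flow] by (simp add: route_prob_eq_node_rate)
qed

lemma weighted_shape_add_item:
  assumes "l \<in> {1..n}"
  shows "(\<Sum>k=1..n. d k * shape n (x(l := Suc (x l))) k)
       = (\<Sum>k=1..n. d k * shape n x k) + (d l - (\<Sum>k=1..n. d k) / real n)"
proof -
  have "(\<Sum>k=1..n. real ((x(l := Suc (x l))) k)) = (\<Sum>k=1..n. real (x k) + (if k = l then 1 else 0))"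
    by (intro sum.cong) auto
  also have "\<dots> = (\<Sum>k=1..n. real (x k)) + 1"
    using assms by (simp add: sum.distrib)
  finally have "mean_load n (x(l := Suc (x l))) = mean_load n x + 1 / real n"
    unfolding mean_load_def by (simp add: add_divide_distrib)
  then have shape_step:
    "shape n (x(l := Suc (x l))) k = shape n x k + (if k = l then 1 else 0) - 1 / real n" for k
    by (simp add: shape_def)
  have "(\<Sum>k=1..n. d k * shape n (x(l := Suc (x l))) k)
      = (\<Sum>k=1..n. d k * shape n x k + (if k = l then d k else 0) - d k / real n)"
    unfolding shape_step by (intro sum.cong) (auto simp: algebra_simps)
  also have "\<dots> = (\<Sum>k=1..n. d k * shape n x k) + (d l - (\<Sum>k=1..n. d k) / real n)"
    using assms by (simp add: sum.distrib sum_subtractf sum_divide_distrib)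
  finally show ?thesis .
qed

lemma node_rates_convex:
  assumes "c \<in> node_rate K kappa s ` feasible_flows K kappa lam"
    and "c' \<in> node_rate K kappa s ` feasible_flows K kappa lam" and "0 \<le> t" "t \<le> 1"
  shows "(\<lambda>l. (1 - t) * c l + t * c' l) \<in> node_rate K kappa s ` feasible_flows K kappa lam"
proof -
  obtain a b where "a \<in> feasible_flows K kappa lam" "b \<in> feasible_flows K kappa lam"
    and "c = node_rate K kappa s a" "c' = node_rate K kappa s b"
    using assms(1,2) by blast
  then show ?thesis
    using feasible_flows_convex assms(3,4)
    by (intro image_eqI[where x = "\<lambda>k. (1 - t) * a k + t * b k"]) (simp_all add: fun_eq_iff node_rate_linear)
qed

lemma one_minus_survive_le_exp_potential:
  fixes g :: "(nat \<Rightarrow> nat) \<Rightarrow> real" and D :: "nat \<Rightarrow> real"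
  assumes r_nonneg: "\<And>x l. 0 \<le> route_prob K kappa s lam p x l"
    and r_sum: "\<And>x. (\<Sum>l=1..n. route_prob K kappa s lam p x l) = 1"
    and g_step: "\<And>x l. l \<in> {1..n} \<Longrightarrow> g (x(l := Suc (x l))) = g x + D l"
    and g_zero: "\<And>x. shape_zero n x \<Longrightarrow> g x = 0"
    and supermartingale: "\<And>x. (\<Sum>l=1..n. route_prob K kappa s lam p x l * exp (- D l)) \<le> 1"
  shows "1 - survive n K kappa s lam p m x \<le> exp (- g x)"
proof (induction m arbitrary: x)
  case 0
  then show ?case by simp
next
  case (Suc m)
  define r where "r l = route_prob K kappa s lam p x l" for l
  define h where "h l = (let x' = x(l := Suc (x l)) in
                           if shape_zero n x' then 0 else survive n K kappa s lam p m x')" for l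
  have "1 - survive n K kappa s lam p (Suc m) x = (\<Sum>l=1..n. r l * (1 - h l))"
    using r_sum[of x] by (simp add: r_def h_def sum_subtractf algebra_simps)
  also have "\<dots> \<le> (\<Sum>l=1..n. r l * (exp (- g x) * exp (- D l)))"
  proof (intro sum_mono mult_left_mono)
    fix l assume l: "l \<in> {1..n}"
    define x' where "x' = x(l := Suc (x l))"
    have "1 - h l \<le> exp (- g x')"
      unfolding h_def Let_def x'_def[symmetric] using Suc.IH[of x'] g_zero[of x'] by auto
    also have "exp (- g x') = exp (- g x) * exp (- D l)"
      using g_step[OF l] by (simp add: x'_def exp_add[symmetric])
    finally show "1 - h l \<le> exp (- g x) * exp (- D l)" .
  qed (simp add: r_def r_nonneg)
  also have "\<dots> = exp (- g x) * (\<Sum>l=1..n. r l * exp (- D l))"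
    by (simp add: sum_distrib_left algebra_simps)
  also have "\<dots> \<le> exp (- g x)"
    using supermartingale[of x] by (simp add: r_def mult_left_le)
  finally show ?case .
qed

lemma not_recurrent_if_uniform_drift:
  fixes d :: "nat \<Rightarrow> real"
  assumes r_nonneg: "\<And>x l. 0 \<le> route_prob K kappa s lam p x l"
    and r_sum: "\<And>x. (\<Sum>l=1..n. route_prob K kappa s lam p x l) = 1"
    and "0 < \<epsilon>"
    and drift: "\<And>x. (\<Sum>l=1..n. d l) / real n + \<epsilon> \<le> (\<Sum>l=1..n. d l * route_prob K kappa s lam p x l)"
  shows "\<not> recurrent n K kappa s lam p"
proof
  assume recurrent: "recurrent n K kappa s lam p"
  define r where "r x l = route_prob K kappa s lam p x l" for x l
  define c where "c = (\<Sum>k=1..n. d k) / real n"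
  define D where "D l = d l - c" for l
  define g where "g x = (\<Sum>k=1..n. d k * shape n x k)" for x
  have g_step: "g (x(l := Suc (x l))) = g x + D l" if "l \<in> {1..n}" for x l
    unfolding g_def D_def c_def by (rule weighted_shape_add_item[OF that])
  define B where "B = (\<Sum>l=1..n. \<bar>D l\<bar>)"
  define \<theta> where "\<theta> = \<epsilon> / B\<^sup>2"
  have D_drift: "\<epsilon> \<le> (\<Sum>l=1..n. r x l * D l)" for x
  proof -
    have "(\<Sum>l=1..n. r x l * D l) = (\<Sum>l=1..n. d l * r x l) - c * (\<Sum>l=1..n. r x l)"
      unfolding D_def by (simp add: algebra_simps sum_subtractf sum_distrib_left)
    then show ?thesis
      using drift[of x] r_sum[of x] by (simp add: r_def c_def)
  qed
  have "\<exists>l\<in>{1..n}. 0 < D l"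
  proof (rule ccontr)
    assume "\<not> ?thesis"
    then have "(\<Sum>l=1..n. r (\<lambda>_. 0) l * D l) \<le> 0"
      using r_nonneg by (intro sum_nonpos mult_nonneg_nonpos) (auto simp: r_def not_less)
    with D_drift[of "\<lambda>_. 0"] \<open>0 < \<epsilon>\<close> show False by linarith
  qed
  then obtain l0 where l0: "l0 \<in> {1..n}" "0 < D l0" by blast
  have "\<bar>D l\<bar> \<le> B" if "l \<in> {1..n}" for l
    unfolding B_def using that by (intro member_le_sum) auto
  then have supermartingale: "(\<Sum>l=1..n. r x l * exp (- (\<theta> * D l))) \<le> 1" for x
    using weighted_exp_le_one_if_drift[of "{1..n}" "r x", OF _ _ _ \<open>0 < \<epsilon>\<close> D_drift]
      r_nonneg r_sum by (simp add: r_def \<theta>_def)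
  have escape: "1 - survive n K kappa s lam p m x \<le> exp (- (\<theta> * g x))" for m x
  proof (rule one_minus_survive_le_exp_potential[where g = "\<lambda>x. \<theta> * g x" and D = "\<lambda>l. \<theta> * D l"])
    show "\<theta> * g (x(l := Suc (x l))) = \<theta> * g x + \<theta> * D l" if "l \<in> {1..n}" for x l
      using g_step[OF that] by (simp add: distrib_left)
    show "\<theta> * g x = 0" if "shape_zero n x" for x
      using that by (simp add: g_def shape_zero_def)
  qed (use r_nonneg r_sum supermartingale in \<open>simp_all add: r_def\<close>)
  define x0 :: "nat \<Rightarrow> nat" where "x0 = (\<lambda>_. 0)(l0 := 1)"
  have "(\<lambda>m. 1 - survive n K kappa s lam p m x0) \<longlonglongrightarrow> 1"
    using recurrent unfolding recurrent_def by blast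
  then have "1 \<le> exp (- (\<theta> * g x0))"
    by (rule LIMSEQ_le_const2) (use escape in blast)
  moreover have "g x0 = D l0"
    using g_step[OF l0(1), of "\<lambda>_. 0"] by (simp add: g_def x0_def shape_def mean_load_def)
  moreover have "0 < \<theta>"
    using \<open>0 < \<epsilon>\<close> member_le_sum[of l0 "{1..n}" "\<lambda>l. \<bar>D l\<bar>"] l0
    by (simp add: \<theta>_def B_def)
  ultimately show False
    using l0(2) by (auto simp: mult_le_0_iff)
qed

theorem theorem2p2:
  fixes n K :: nat and kappa :: "nat \<Rightarrow> nat" and s :: "nat \<Rightarrow> nat \<Rightarrow> nat"
    and lam :: "nat \<Rightarrow> real"
  assumes "storage_model n K kappa s lam"
    and "\<exists>p. routing_policy n K kappa p \<and> recurrent n K kappa s lam p"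
  shows "\<exists>\<alpha> :: nat \<Rightarrow> nat \<Rightarrow> real.
           (\<forall>i\<in>{1..K}. \<forall>j\<in>{1..kappa i}. \<alpha> i j \<ge> 0) \<and>
           (\<forall>i\<in>{1..K}. (\<Sum>j=1..kappa i. \<alpha> i j) = lam i) \<and>
           (\<forall>l\<in>{1..n}. (\<Sum>i=1..K. \<Sum>j=1..kappa i. \<alpha> i j * (if l = s i j then 1 else 0))
                         = 1 / real n)"
proof -
  obtain p where policy: "routing_policy n K kappa p" and recurrent: "recurrent n K kappa s lam p"
    using assms(2) by blast
  note flow = policy_flow_feasible[OF assms(1) policy]
  note route = route_prob_distribution[OF assms(1) policy]
  let ?C = "node_rate K kappa s ` feasible_flows K kappa lam"
  have "(\<exists>c\<in>?C. \<forall>l\<in>{1..n}. c l = 1 / real n) \<or>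
        (\<exists>d \<epsilon>. \<epsilon> > 0 \<and> (\<forall>c\<in>?C. (\<Sum>l=1..n. d l * (1 / real n)) + \<epsilon> \<le> (\<Sum>l=1..n. d l * c l)))"
    using flow
    by (intro convex_compact_separation compact_node_rates node_rates_convex finite_atLeastAtMost) blast+
  then show ?thesis
  proof
    assume "\<exists>c\<in>?C. \<forall>l\<in>{1..n}. c l = 1 / real n"
    then obtain a where "a \<in> feasible_flows K kappa lam" "\<forall>l\<in>{1..n}. node_rate K kappa s a l = 1 / real n"
      by blast
    then show ?thesis
      by (intro exI[of _ "\<lambda>i j. a (i, j)"]) (auto simp: feasible_flows_def node_rate_def)
  next
    assume "\<exists>d \<epsilon>. \<epsilon> > 0 \<and> (\<forall>c\<in>?C. (\<Sum>l=1..n. d l * (1 / real n)) + \<epsilon> \<le> (\<Sum>l=1..n. d l * c l))"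
    then obtain d \<epsilon> where "0 < \<epsilon>"
      "\<And>x. (\<Sum>l=1..n. d l) / real n + \<epsilon> \<le> (\<Sum>l=1..n. d l * route_prob K kappa s lam p x l)"
      using flow by (auto simp: route_prob_eq_node_rate sum_divide_distrib)
    with not_recurrent_if_uniform_drift[OF route] recurrent show ?thesis
      by blast
  qed
qed

end
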